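(* Let $\Bbbk$ be a field of characteristic zero, $n \geq 4$, $S=\Bbbk[x_1,\ldots,x_n]$. If $I\subset S$ is an artinian ideal minimally generated by $n+1$ quadratic monomials, then $S/I$ has the WLP.
   Context: A standard graded artinian algebra $A=\bigoplus_i A_i$ has the WLP if there is a linear form $\ell$ such that $\times\ell:A_k\to A_{k+1}$ has maximal rank (is injective or surjective) for every $k$; for monomial quotients $S/I$ this is equivalent to taking $\ell=x_1+\cdots+x_n$. *)

theory Defs
  imports Main
begin

text \<open>Monomials of S = k[x_0,...,x_{n-1}] are represented by exponent vectors
  (functions nat => nat vanishing from index n on).  The quotient A = S/I has as k-basis the standard
  monomials (those not in I), graded by degree; A_k is represented as the space of
  k-valued functions on monomials supported on the standard monomials of degree k.\<close>

type_synonym mono = "nat \<Rightarrow> nat"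

definition monomials :: "nat \<Rightarrow> mono set" where
  "monomials n = {a. \<forall>i\<ge>n. a i = 0}"

definition mdeg :: "nat \<Rightarrow> mono \<Rightarrow> nat" where
  "mdeg n a = (\<Sum>i<n. a i)"

definition mdvd :: "mono \<Rightarrow> mono \<Rightarrow> bool" where
  "mdvd a b \<longleftrightarrow> (\<forall>i. a i \<le> b i)"

definition in_mideal :: "mono set \<Rightarrow> mono \<Rightarrow> bool" where
  "in_mideal G m \<longleftrightarrow> (\<exists>g\<in>G. mdvd g m)"

definition var_exp :: "nat \<Rightarrow> mono" where
  "var_exp i = (\<lambda>j. if j = i then 1 else 0)"

definition std_monos :: "nat \<Rightarrow> mono set \<Rightarrow> nat \<Rightarrow> mono set" where
  "std_monos n G k = {a \<in> monomials n. mdeg n a = k \<and> \<not> in_mideal G a}"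

text \<open>S/I is artinian: finite-dimensional, i.e. finitely many standard monomials.\<close>
definition artinian_mideal :: "nat \<Rightarrow> mono set \<Rightarrow> bool" where
  "artinian_mideal n G \<longleftrightarrow> finite {a \<in> monomials n. \<not> in_mideal G a}"

definition minimal_gens :: "mono set \<Rightarrow> bool" where
  "minimal_gens G \<longleftrightarrow> (\<forall>g\<in>G. \<not> in_mideal (G - {g}) g)"

definition graded_piece :: "nat \<Rightarrow> mono set \<Rightarrow> nat \<Rightarrow> (mono \<Rightarrow> 'a::zero) set" where
  "graded_piece n G k = {f. \<forall>a. a \<notin> std_monos n G k \<longrightarrow> f a = 0}"

text \<open>Multiplication by the linear form l = sum_{i<n} c_i x_i, from A_k to A_{k+1}.\<close>
definition mult_lin :: "nat \<Rightarrow> mono set \<Rightarrow> (nat \<Rightarrow> 'a::comm_ring_1) \<Rightarrow> nat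
    \<Rightarrow> (mono \<Rightarrow> 'a) \<Rightarrow> (mono \<Rightarrow> 'a)" where
  "mult_lin n G c k f = (\<lambda>b. if b \<in> std_monos n G (k+1) then
      (\<Sum>i<n. if 0 < b i \<and> (\<lambda>j. b j - var_exp i j) \<in> std_monos n G k
              then c i * f (\<lambda>j. b j - var_exp i j) else 0)
    else 0)"

definition max_rank_mult :: "nat \<Rightarrow> mono set \<Rightarrow> (nat \<Rightarrow> 'a::comm_ring_1) \<Rightarrow> nat \<Rightarrow> bool" where
  "max_rank_mult n G c k \<longleftrightarrow>
     inj_on (mult_lin n G c k) (graded_piece n G k)
     \<or> mult_lin n G c k ` graded_piece n G k = graded_piece n G (k+1)"

definition has_WLP :: "'a::field itself \<Rightarrow> nat \<Rightarrow> mono set \<Rightarrow> bool" where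
  "has_WLP _ n G \<longleftrightarrow> (\<exists>c :: nat \<Rightarrow> 'a. \<forall>k. max_rank_mult n G c k)"

end

theory Submission
  imports Defs
begin

text \<open>
  Since \<open>S/I\<close> is artinian, every \<open>x_i\<^sup>2\<close> is a generator, so by counting and minimality
  \<open>I = (x_1\<^sup>2, \<dots>, x_n\<^sup>2, x_a x_b)\<close> and the standard monomials are the squarefree monomials
  not divisible by \<open>x_a x_b\<close>. Take \<open>\<ell>\<close> to be the sum of the \<open>x_i\<close> with \<open>i \<noteq> b\<close>.
  Multiplication \<open>U\<close> by \<open>\<ell>\<close> then preserves whether \<open>x_b\<close> divides a standard monomial, and
  each of the two strata is a Boolean lattice: of the \<open>n - 1\<close> variables other than \<open>x_b\<close>,
  resp. \<open>x_b\<close> times that of the \<open>n - 2\<close> variables other than \<open>x_a, x_b\<close>. With \<open>D\<close> the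
  transpose of \<open>U\<close>, on degree \<open>m\<close> the commutator \<open>D U - U D\<close> is multiplication by
  \<open>N - 2m\<close>, where \<open>N = n - 1\<close> resp. \<open>N = n\<close>. In characteristic zero this sl2-relation makes
  \<open>U\<close> injective below the middle degree and surjective above it.
\<close>

section \<open>Raising operators of sl2-representations\<close>

text \<open>For \<open>m = 0\<close> the index \<open>m - 1\<close> in \<open>commutator\<close> truncates to \<open>0\<close>, which is
  harmless since \<open>D 0\<close> vanishes.\<close>
locale sl2_rep =
  fixes V :: "nat \<Rightarrow> ('x \<Rightarrow> 'a::field_char_0) set"
    and U :: "nat \<Rightarrow> ('x \<Rightarrow> 'a) \<Rightarrow> ('x \<Rightarrow> 'a)"
    and D :: "nat \<Rightarrow> ('x \<Rightarrow> 'a) \<Rightarrow> ('x \<Rightarrow> 'a)"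
    and N :: nat
  assumes raise_lin: "U m (\<lambda>x. c * f x + d * g x) = (\<lambda>x. c * U m f x + d * U m g x)"
    and lower_lin: "D m (\<lambda>x. c * f x + d * g x) = (\<lambda>x. c * D m f x + d * D m g x)"
    and V_lin: "f \<in> V m \<Longrightarrow> g \<in> V m \<Longrightarrow> (\<lambda>x. c * f x + d * g x) \<in> V m"
    and V_zero: "(\<lambda>x. 0) \<in> V m"
    and raise_V: "f \<in> V m \<Longrightarrow> U m f \<in> V (Suc m)"
    and lower_V: "f \<in> V (Suc m) \<Longrightarrow> D (Suc m) f \<in> V m"
    and lower_bottom: "f \<in> V 0 \<Longrightarrow> D 0 f = (\<lambda>x. 0)"
    and commutator: "f \<in> V m \<Longrightarrow>
      D (Suc m) (U m f) = (\<lambda>x. U (m - 1) (D m f) x + of_int (int N - 2 * int m) * f x)"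
    and V_above_top: "N < m \<Longrightarrow> f \<in> V m \<Longrightarrow> f = (\<lambda>x. 0)"
begin

lemma raise_zero: "U m (\<lambda>x. 0) = (\<lambda>x. 0)"
  using raise_lin[of m 0 "\<lambda>x. 0" 0 "\<lambda>x. 0"] by simp

lemma lower_zero: "D m (\<lambda>x. 0) = (\<lambda>x. 0)"
  using lower_lin[of m 0 "\<lambda>x. 0" 0 "\<lambda>x. 0"] by simp

text \<open>Below the middle, \<open>l + D U\<close> is injective for every \<open>l \<ge> 0\<close>: commuting \<open>D\<close> past \<open>U\<close>
  raises \<open>l\<close> by the positive weight \<open>N - 2m\<close> and passes to \<open>D f\<close> one degree lower.\<close>
lemma shifted_lower_raise_kernel:
  assumes "f \<in> V m" "2 * m < N" "\<forall>x. of_nat l * f x + D (Suc m) (U m f) x = 0"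
  shows "f = (\<lambda>x. 0)"
  using assms
proof (induction m arbitrary: l f)
  case 0
  have "D (Suc 0) (U 0 f) = (\<lambda>x. of_nat N * f x)"
    using commutator[OF "0.prems"(1)] lower_bottom[OF "0.prems"(1)] raise_zero by simp
  then have "\<forall>x. of_nat (l + N) * f x = (0::'a)"
    using "0.prems"(3) by (simp add: distrib_right)
  then show ?case using "0.prems"(2) by (simp add: fun_eq_iff del: of_nat_add)
next
  case (Suc m)
  define q where "q = N - 2 * Suc m"
  define g where "g = D (Suc m) f"
  have g_V: "g \<in> V m" using lower_V Suc.prems(1) g_def by simp
  have "of_int (int N - 2 * int (Suc m)) = (of_nat q :: 'a)"
    using Suc.prems(2) q_def by (simp add: of_nat_diff)
  then have "D (Suc (Suc m)) (U (Suc m) f) = (\<lambda>x. U m g x + of_nat q * f x)"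
    using commutator[OF Suc.prems(1)] unfolding g_def by simp
  then have fg: "(\<lambda>x. of_nat (l + q) * f x + 1 * U m g x) = (\<lambda>x. 0)"
    using Suc.prems(3) by (auto simp: fun_eq_iff algebra_simps)
  then have "D (Suc m) (\<lambda>x. of_nat (l + q) * f x + 1 * U m g x) = (\<lambda>x. 0)"
    using lower_zero by simp
  then have g_eq: "\<forall>x. of_nat (l + q) * g x + D (Suc m) (U m g) x = 0"
    unfolding lower_lin by (simp add: g_def[symmetric] fun_eq_iff)
  have g_zero: "g = (\<lambda>x. 0)" using Suc.IH[OF g_V _ g_eq] Suc.prems(2) by simp
  have "\<forall>x. of_nat (l + q) * f x = (0::'a)"
    using fg[unfolded g_zero raise_zero] by (simp add: fun_eq_iff del: of_nat_add)
  moreover have "l + q \<noteq> 0" using Suc.prems(2) q_def by simp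
  ultimately show ?case by (auto simp: fun_eq_iff simp del: of_nat_add)
qed

lemma raise_inj_on:
  assumes "2 * m < N"
  shows "inj_on (U m) (V m)"
proof (rule inj_onI)
  fix f g assume f: "f \<in> V m" and g: "g \<in> V m" and eq: "U m f = U m g"
  define h where "h = (\<lambda>x. 1 * f x + (-1) * g x)"
  have "h \<in> V m" unfolding h_def using V_lin f g by blast
  moreover have "U m h = (\<lambda>x. 0)" unfolding h_def raise_lin eq by simp
  ultimately have "h = (\<lambda>x. 0)"
    using shifted_lower_raise_kernel[of h m 0] assms lower_zero by simp
  then show "f = g" unfolding h_def by (auto simp: fun_eq_iff)
qed

text \<open>Descending induction on the degree, starting from the zero spaces above \<open>N\<close>.\<close>
lemma shifted_raise_lower_onto:
  assumes "N < 2 * m" "g \<in> V m"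
  shows "\<exists>f\<in>V m. \<forall>x. of_nat l * f x + U (m - 1) (D m f) x = g x"
  using assms
proof (induction "N + 1 - m" arbitrary: m l g)
  case 0
  then have "g = (\<lambda>x. 0)" using V_above_top[of m g] by simp
  then show ?case using V_zero lower_zero raise_zero by (intro bexI[of _ "\<lambda>x. 0"]) auto
next
  case (Suc d)
  define p where "p = 2 * m - N"
  define r :: 'a where "r = of_nat (l + p)"
  have "l + p \<noteq> 0" using Suc.prems(1) p_def by simp
  then have r_nz: "r \<noteq> 0" unfolding r_def of_nat_eq_0_iff .
  have "d = N + 1 - Suc m" using Suc.hyps(2) by arith
  then obtain y where y_V: "y \<in> V (Suc m)"
    and y: "\<forall>x. r * y x + U m (D (Suc m) y) x = U m g x"
    using Suc.hyps(1)[of "Suc m" "U m g" "l + p"] Suc.prems raise_V r_def by auto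
  define f where "f = (\<lambda>x. inverse r * g x + (- inverse r) * D (Suc m) y x)"
  have f_V: "f \<in> V m" unfolding f_def using V_lin Suc.prems(2) lower_V y_V by blast
  have "U m f = y"
    unfolding f_def raise_lin using y r_nz by (auto simp: fun_eq_iff field_simps)
  moreover have "of_int (int N - 2 * int m) = - (of_nat p :: 'a)"
    using Suc.prems(1) p_def by (simp add: of_nat_diff)
  ultimately have "\<forall>x. D (Suc m) y x = U (m - 1) (D m f) x - of_nat p * f x"
    using commutator[OF f_V] by simp
  then have "\<forall>x. of_nat l * f x + U (m - 1) (D m f) x = r * f x + D (Suc m) y x"
    by (simp add: r_def algebra_simps)
  moreover have "\<forall>x. r * f x + D (Suc m) y x = g x"
    using r_nz by (simp add: f_def field_simps)
  ultimately have "\<forall>x. of_nat l * f x + U (m - 1) (D m f) x = g x" by simp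
  then show ?case using f_V by blast
qed

lemma raise_onto:
  assumes "N < 2 * m" "g \<in> V m"
  shows "\<exists>f\<in>V (m - 1). U (m - 1) f = g"
proof -
  obtain f where f_V: "f \<in> V m" and f: "\<forall>x. U (m - 1) (D m f) x = g x"
    using shifted_raise_lower_onto[OF assms, of 0] by auto
  have "D m f \<in> V (m - 1)" using lower_V[of f "m - 1"] f_V assms(1) by (cases m) auto
  then show ?thesis using f by (auto simp: fun_eq_iff)
qed

end

abbreviation times_var :: "mono \<Rightarrow> nat \<Rightarrow> mono" where
  "times_var S i \<equiv> (\<lambda>l. S l + var_exp i l)"

abbreviation div_var :: "mono \<Rightarrow> nat \<Rightarrow> mono" where
  "div_var S i \<equiv> (\<lambda>l. S l - var_exp i l)"

lemma mdeg_times_var: "i < n \<Longrightarrow> mdeg n (times_var S i) = Suc (mdeg n S)"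
  by (simp add: mdeg_def sum.distrib var_exp_def)

lemma mdeg_div_var:
  assumes "i < n" "0 < S i"
  shows "Suc (mdeg n (div_var S i)) = mdeg n S"
proof -
  have "mdeg n S = mdeg n (times_var (div_var S i) i)"
    using assms(2) by (simp add: var_exp_def fun_eq_iff)
  then show ?thesis using mdeg_times_var[OF assms(1)] by simp
qed

lemma div_times_var: "div_var (times_var S i) i = S"
  by (simp add: var_exp_def)

lemma times_div_var: "0 < S i \<Longrightarrow> times_var (div_var S i) i = S"
  by (auto simp: var_exp_def fun_eq_iff)

lemma times_div_var_swap: "i \<noteq> j \<Longrightarrow> div_var (times_var S i) j = times_var (div_var S j) i"
  by (auto simp: var_exp_def fun_eq_iff)

definition var_sq :: "nat \<Rightarrow> mono" where
  "var_sq i = (\<lambda>j. if j = i then 2 else 0)"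

definition var_pair :: "nat \<Rightarrow> nat \<Rightarrow> mono" where
  "var_pair a b = (\<lambda>l. if l = a \<or> l = b then 1 else 0)"

lemma mdvd_var_sq_iff: "mdvd (var_sq i) T \<longleftrightarrow> 2 \<le> T i"
  by (auto simp: mdvd_def var_sq_def dest: spec[of _ i])

lemma mdvd_var_pair_iff: "mdvd (var_pair a b) T \<longleftrightarrow> 1 \<le> T a \<and> 1 \<le> T b"
  by (auto simp: mdvd_def var_pair_def dest: spec[of _ a] spec[of _ b])

text \<open>Artinian means some power \<open>x_i^t\<close> lies in the ideal; the generator dividing it is a
  pure power of \<open>x_i\<close> of degree \<open>2\<close>.\<close>
lemma var_sq_in_gens:
  assumes art: "artinian_mideal n G" and deg: "\<forall>g\<in>G. mdeg n g = 2" and i: "i < n"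
  shows "var_sq i \<in> G"
proof -
  define pw where "pw t = (\<lambda>j. if j = i then t else (0::nat))" for t
  have "inj pw" by (rule injI) (metis pw_def)
  have "\<exists>t. in_mideal G (pw t)"
  proof (rule ccontr)
    assume "\<not> (\<exists>t. in_mideal G (pw t))"
    then have "range pw \<subseteq> {a \<in> monomials n. \<not> in_mideal G a}"
      using i by (auto simp: pw_def monomials_def)
    then have "finite (range pw)" using art unfolding artinian_mideal_def by (rule finite_subset)
    then show False using \<open>inj pw\<close> finite_imageD by auto
  qed
  then obtain t g where g: "g \<in> G" "mdvd g (pw t)" unfolding in_mideal_def by blast
  have g_off: "g j = 0" if "j \<noteq> i" for j
    using g(2) that by (auto simp: mdvd_def pw_def dest: spec[of _ j])
  have "mdeg n g = (\<Sum>l<n. if l = i then g i else 0)"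
    unfolding mdeg_def by (rule sum.cong) (auto simp: g_off)
  also have "\<dots> = g i" using i by simp
  finally have "g = var_sq i" using deg g(1) g_off by (auto simp: var_sq_def fun_eq_iff)
  then show ?thesis using g(1) by simp
qed

lemma gens_eq_insert_squares:
  assumes squares: "var_sq ` {..<n} \<subseteq> G" and card: "card G = n + 1"
  obtains g0 where "G = insert g0 (var_sq ` {..<n})" "g0 \<notin> var_sq ` {..<n}"
proof -
  have "inj_on var_sq {..<n}" by (rule inj_onI) (metis var_sq_def zero_neq_numeral)
  then have "card (var_sq ` {..<n}) = n" by (simp add: card_image)
  moreover have "finite G" using card by (metis card.infinite add_is_0 one_neq_zero)
  ultimately have "card (G - var_sq ` {..<n}) = 1"
    using card squares by (simp add: card_Diff_subset finite_subset)
  then obtain g0 where "G - var_sq ` {..<n} = {g0}" by (auto simp: card_Suc_eq)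
  then show ?thesis using that squares by blast
qed

text \<open>A degree-2 generator other than a square is squarefree, since by minimality no square
  \<open>x_j^2\<close> divides it.\<close>
lemma extra_gen_eq_var_pair:
  assumes g0: "g0 \<in> G" "g0 \<in> monomials n" "mdeg n g0 = 2" "g0 \<notin> var_sq ` {..<n}"
    and squares: "var_sq ` {..<n} \<subseteq> G" and minimal: "minimal_gens G"
  obtains a b where "a < n" "b < n" "a \<noteq> b" "g0 = var_pair a b"
proof -
  have g0_le: "g0 j \<le> 1" for j
  proof (rule ccontr)
    assume "\<not> g0 j \<le> 1"
    then have "mdvd (var_sq j) g0" "j < n"
      using g0(2) by (auto simp: mdvd_var_sq_iff) (cases "j < n"; auto simp: monomials_def)
    then have "in_mideal (G - {g0}) g0" using squares g0(4) by (auto simp: in_mideal_def)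
    then show False using minimal g0(1) by (auto simp: minimal_gens_def)
  qed
  define P where "P = {i\<in>{..<n}. g0 i = 1}"
  have "2 = (\<Sum>l<n. g0 l)" using g0(3) by (simp add: mdeg_def)
  also have "\<dots> = (\<Sum>l<n. if g0 l = 1 then 1 else 0)"
    using g0_le by (intro sum.cong) (auto simp: le_Suc_eq)
  also have "\<dots> = card P" by (simp add: P_def sum.inter_filter[symmetric])
  finally obtain a b where P: "P = {a, b}" "a \<noteq> b" by (auto simp: card_2_iff)
  moreover have "g0 = var_pair a b"
  proof
    fix l show "g0 l = var_pair a b l"
      using g0(2) g0_le[of l] P
      by (cases "l < n") (auto simp: P_def var_pair_def monomials_def le_Suc_eq)
  qed
  ultimately show ?thesis using that P by (auto simp: P_def)
qed

definition sqfree_avoid :: "nat \<Rightarrow> nat \<Rightarrow> nat \<Rightarrow> nat \<Rightarrow> mono set" where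
  "sqfree_avoid n a b k =
     {T \<in> monomials n. mdeg n T = k \<and> (\<forall>l. T l \<le> 1) \<and> \<not> (T a = 1 \<and> T b = 1)}"

lemma std_monos_squares_pair:
  assumes "G = insert (var_pair a b) (var_sq ` {..<n})"
  shows "std_monos n G k = sqfree_avoid n a b k"
proof -
  have in_G: "in_mideal G T \<longleftrightarrow> (\<exists>i<n. 2 \<le> T i) \<or> (1 \<le> T a \<and> 1 \<le> T b)" for T
    using assms by (auto simp: in_mideal_def mdvd_var_sq_iff mdvd_var_pair_iff)
  have sqfree: "(\<exists>i<n. 2 \<le> T i) \<longleftrightarrow> \<not> (\<forall>l. T l \<le> 1)" if "T \<in> monomials n" for T
  proof
    assume "\<not> (\<forall>l. T l \<le> 1)"
    then obtain l where "\<not> T l \<le> 1" by blast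
    moreover from this have "l < n" using that by (cases "l < n") (auto simp: monomials_def)
    ultimately show "\<exists>i<n. 2 \<le> T i" by auto
  next
    assume "\<exists>i<n. 2 \<le> T i"
    then show "\<not> (\<forall>l. T l \<le> 1)" by (metis not_less_eq_eq one_add_one plus_1_eq_Suc)
  qed
  have "\<not> in_mideal G T \<longleftrightarrow> (\<forall>l. T l \<le> 1) \<and> \<not> (T a = 1 \<and> T b = 1)"
    if "T \<in> monomials n" for T
  proof -
    have "\<not> in_mideal G T \<longleftrightarrow> (\<forall>l. T l \<le> 1) \<and> \<not> (1 \<le> T a \<and> 1 \<le> T b)"
      unfolding in_G sqfree[OF that] by blast
    also have "\<dots> \<longleftrightarrow> (\<forall>l. T l \<le> 1) \<and> \<not> (T a = 1 \<and> T b = 1)"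
      by (metis le_antisym order_refl)
    finally show ?thesis .
  qed
  then show ?thesis by (auto simp: std_monos_def sqfree_avoid_def)
qed

section \<open>Multiplication by the linear form on the standard monomials\<close>

lemma sum_if_const_eq_card:
  "finite A \<Longrightarrow> (\<Sum>i\<in>A. if P i then x else 0) = of_nat (card {i\<in>A. P i}) * (x::'a::semiring_1)"
  by (simp add: sum.inter_filter[symmetric])

locale sqfree_pair =
  fixes n a b :: nat
  assumes a_lt: "a < n" and b_lt: "b < n" and a_ne_b: "a \<noteq> b"
begin

abbreviation std :: "nat \<Rightarrow> mono set" where
  "std \<equiv> sqfree_avoid n a b"

lemma std_support: "S \<in> std m \<Longrightarrow> 0 < S j \<Longrightarrow> j < n"
  by (auto simp: sqfree_avoid_def monomials_def not_less[symmetric])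

lemma std_pos_iff:
  assumes "S \<in> std m" shows "0 < S j \<longleftrightarrow> S j = 1"
proof -
  have "S j \<le> 1" using assms by (simp add: sqfree_avoid_def)
  then show ?thesis by auto
qed

lemma std_0: "S \<in> std 0 \<Longrightarrow> S j = 0"
  using std_support[of S 0 j] by (auto simp: sqfree_avoid_def mdeg_def)

lemma times_var_std_iff:
  assumes S: "S \<in> std m" and i: "i < n"
  shows "times_var S i \<in> std (Suc m)
    \<longleftrightarrow> S i = 0 \<and> \<not> (S a + var_exp i a = 1 \<and> S b + var_exp i b = 1)"
proof -
  have "(\<forall>l. S l + var_exp i l \<le> 1) \<longleftrightarrow> S i = 0"
    using S by (auto simp: sqfree_avoid_def var_exp_def dest: spec[of _ i])
  moreover have "times_var S i \<in> monomials n" "mdeg n (times_var S i) = Suc m"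
    using S i mdeg_times_var[OF i] by (auto simp: sqfree_avoid_def monomials_def var_exp_def)
  ultimately show ?thesis by (simp add: sqfree_avoid_def)
qed

lemma div_var_std:
  assumes S: "S \<in> std m" and j: "0 < S j"
  shows "div_var S j \<in> std (m - 1)"
proof -
  have "Suc (mdeg n (div_var S j)) = m"
    using mdeg_div_var[of j n S, OF std_support[OF S j] j] S by (simp add: sqfree_avoid_def)
  then show ?thesis using S by (auto simp: sqfree_avoid_def monomials_def var_exp_def)
qed

text \<open>As \<open>j \<notin> {i, b}\<close>, a factor \<open>x_a x_b\<close> of \<open>S x_i\<close> would survive the division by \<open>x_j\<close>
  if \<open>a = i\<close>, and would already divide \<open>S\<close> if \<open>a \<noteq> i\<close>.\<close>
lemma times_var_std_of_exchange:
  assumes S: "S \<in> std m" and ij: "i \<noteq> j" "i \<noteq> b" "j \<noteq> b" and i: "i < n"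
    and Si: "S i = 0" and Sj: "0 < S j"
    and exch: "div_var (times_var S i) j \<in> std m"
  shows "times_var S i \<in> std (Suc m)"
proof -
  have "\<not> (S a + var_exp i a = 1 \<and> S b + var_exp i b = 1)"
  proof (cases "a = i")
    case True
    then have "S a + var_exp i a - var_exp j a = 1" using Si ij by (simp add: var_exp_def)
    then have "S b + var_exp i b - var_exp j b \<noteq> 1" using exch unfolding sqfree_avoid_def by auto
    then show ?thesis using ij by (simp add: var_exp_def)
  next
    case False
    then show ?thesis using S ij unfolding sqfree_avoid_def var_exp_def by auto
  qed
  then show ?thesis using times_var_std_iff[OF S i] Si by simp
qed

definition lin_coeff :: "nat \<Rightarrow> 'a::field" where
  "lin_coeff i = (if i = b then 0 else 1)"

definition raise :: "nat \<Rightarrow> (mono \<Rightarrow> 'a::field) \<Rightarrow> mono \<Rightarrow> 'a" where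
  "raise m f = (\<lambda>T. if T \<in> std (Suc m) then
     (\<Sum>j<n. if 0 < T j \<and> div_var T j \<in> std m then lin_coeff j * f (div_var T j) else 0)
   else 0)"

text \<open>\<open>lower m\<close> is the transpose of \<open>raise (m - 1)\<close> in the basis of standard monomials.\<close>
definition lower :: "nat \<Rightarrow> (mono \<Rightarrow> 'a::field) \<Rightarrow> mono \<Rightarrow> 'a" where
  "lower m g = (\<lambda>S. if 0 < m \<and> S \<in> std (m - 1) then
     (\<Sum>i<n. if i \<noteq> b \<and> S i = 0 \<and> times_var S i \<in> std m then g (times_var S i) else 0)
   else 0)"

definition lower_raise_term :: "mono \<Rightarrow> (mono \<Rightarrow> 'a::field) \<Rightarrow> nat \<Rightarrow> nat \<Rightarrow> nat \<Rightarrow> 'a" where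
  "lower_raise_term S f m i j =
    (if i \<noteq> b \<and> S i = 0 \<and> times_var S i \<in> std (Suc m)
        \<and> 0 < S j + var_exp i j \<and> div_var (times_var S i) j \<in> std m
     then lin_coeff j * f (div_var (times_var S i) j) else 0)"

definition raise_lower_term :: "mono \<Rightarrow> (mono \<Rightarrow> 'a::field) \<Rightarrow> nat \<Rightarrow> nat \<Rightarrow> nat \<Rightarrow> 'a" where
  "raise_lower_term S f m i j =
    (if 0 < S j \<and> div_var S j \<in> std (m - 1) \<and> i \<noteq> b
        \<and> S i - var_exp j i = 0 \<and> times_var (div_var S j) i \<in> std m
     then lin_coeff j * f (times_var (div_var S j) i) else 0)"

lemma lower_raise_expand:
  assumes "S \<in> std m"
  shows "lower (Suc m) (raise m f) S = (\<Sum>i<n. \<Sum>j<n. lower_raise_term S f m i j)"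
  using assms
  by (auto simp: lower_def raise_def lower_raise_term_def intro!: sum.cong)

lemma raise_lower_expand:
  assumes S: "S \<in> std m"
  shows "raise (m - 1) (lower m f) S = (\<Sum>j<n. \<Sum>i<n. raise_lower_term S f m i j)"
proof (cases m)
  case 0
  then have "S j = 0" for j using S std_0 by simp
  then show ?thesis using \<open>m = 0\<close> by (simp add: raise_def lower_def raise_lower_term_def)
next
  case (Suc m')
  then show ?thesis using S
    by (auto simp: raise_def lower_def raise_lower_term_def sum_distrib_left intro!: sum.cong)
qed

text \<open>Off the diagonal the two double sums agree term by term (the coefficient \<open>0\<close> of
  \<open>x_b\<close> kills the terms with \<open>j = b\<close>); on the diagonal they count the variables that
  can be multiplied, respectively divided, into \<open>S\<close>.\<close>
lemma lower_raise_term_eq: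
  assumes S: "S \<in> std m" and i: "i < n"
  shows "lower_raise_term S f m i j = raise_lower_term S f m i j + (if i = j then
     (if i \<noteq> b \<and> S i = 0 \<and> times_var S i \<in> std (Suc m) then f S else 0)
     - (if i \<noteq> b \<and> 0 < S i then f S else 0) else 0)"
proof (cases "i = j")
  case True
  have "raise_lower_term S f m i i = (if i \<noteq> b \<and> 0 < S i then f S else 0)"
    using S div_var_std[OF S] times_div_var[of S i] std_pos_iff[OF S, of i]
    by (auto simp: raise_lower_term_def lin_coeff_def var_exp_def)
  then show ?thesis using True S
    by (auto simp: lower_raise_term_def lin_coeff_def var_exp_def div_times_var)
next
  case False
  have "lower_raise_term S f m i j = raise_lower_term S f m i j"
  proof (cases "j \<noteq> b \<and> i \<noteq> b \<and> S i = 0 \<and> 0 < S j \<and> div_var (times_var S i) j \<in> std m")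
    case True
    then have "times_var S i \<in> std (Suc m)"
      using times_var_std_of_exchange[OF S False _ _ i] by blast
    moreover have "div_var S j \<in> std (m - 1)" using div_var_std[OF S] True by blast
    ultimately show ?thesis using True False
      by (simp add: lower_raise_term_def raise_lower_term_def times_div_var_swap var_exp_def)
  next
    case False
    then show ?thesis using \<open>i \<noteq> j\<close>
      by (auto simp: lower_raise_term_def raise_lower_term_def lin_coeff_def times_div_var_swap
          var_exp_def)
  qed
  then show ?thesis using False by simp
qed

lemma card_support_std:
  assumes S: "S \<in> std m" shows "card {i\<in>{..<n}. 0 < S i} = m"
proof -
  have "m = (\<Sum>i<n. S i)" using S by (simp add: sqfree_avoid_def mdeg_def)
  also have "\<dots> = (\<Sum>i<n. if 0 < S i then 1 else 0)"
    using std_pos_iff[OF S] by (intro sum.cong) auto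
  finally show ?thesis by (simp add: sum.inter_filter[symmetric])
qed

lemma up_down_count:
  assumes S: "S \<in> std m"
  shows "int (card {i\<in>{..<n}. i \<noteq> b \<and> S i = 0 \<and> times_var S i \<in> std (Suc m)})
       - int (card {i\<in>{..<n}. i \<noteq> b \<and> 0 < S i})
     = int n - 1 - 2 * int m + (if S b = 0 then 0 else 1)"
proof -
  define Z where "Z = {i\<in>{..<n}. S i = 0}"
  define P where "P = {i\<in>{..<n}. 0 < S i}"
  have card_P: "card P = m" using card_support_std[OF S] P_def by simp
  have "card Z + card P = card (Z \<union> P)"
    by (rule card_Un_disjoint[symmetric]) (auto simp: Z_def P_def)
  also have "Z \<union> P = {..<n}" by (auto simp: Z_def P_def)
  finally have ZP: "card Z + card P = n" by simp
  have up: "{i\<in>{..<n}. i \<noteq> b \<and> S i = 0 \<and> times_var S i \<in> std (Suc m)}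
     = {i\<in>{..<n}. i \<noteq> b \<and> S i = 0 \<and> \<not> (S a + var_exp i a = 1 \<and> S b + var_exp i b = 1)}"
    using times_var_std_iff[OF S] by auto
  have fin: "finite Z" "finite P" by (simp_all add: Z_def P_def)
  show ?thesis
  proof (cases "S b = 0")
    case True
    have "{i\<in>{..<n}. i \<noteq> b \<and> S i = 0 \<and> times_var S i \<in> std (Suc m)} = Z - {b}"
      unfolding up using True by (auto simp: Z_def var_exp_def)
    moreover have "{i\<in>{..<n}. i \<noteq> b \<and> 0 < S i} = P" using True by (auto simp: P_def)
    moreover have "b \<in> Z" using True b_lt by (simp add: Z_def)
    moreover from this have "0 < card Z" using fin by (auto simp: card_gt_0_iff)
    ultimately show ?thesis using card_P ZP True fin by (simp add: card_Diff_singleton)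
  next
    case False
    then have Sb: "S b = 1" using std_pos_iff[OF S, of b] by simp
    then have Sa: "S a = 0" using S std_pos_iff[OF S, of a] by (auto simp: sqfree_avoid_def)
    have "{i\<in>{..<n}. i \<noteq> b \<and> S i = 0 \<and> times_var S i \<in> std (Suc m)} = Z - {a}"
      unfolding up using Sa Sb a_ne_b by (auto simp: Z_def var_exp_def)
    moreover have "{i\<in>{..<n}. i \<noteq> b \<and> 0 < S i} = P - {b}" by (auto simp: P_def)
    moreover have "a \<in> Z" "b \<in> P" using Sa Sb a_lt b_lt by (simp_all add: Z_def P_def)
    moreover from this have "0 < card Z" "0 < card P" using fin by (auto simp: card_gt_0_iff)
    ultimately show ?thesis using card_P ZP False fin by (simp add: card_Diff_singleton)
  qed
qed

lemma lower_raise_commutator: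
  assumes S: "S \<in> std m"
  shows "lower (Suc m) (raise m f) S = raise (m - 1) (lower m f) S
     + of_int (int n - 1 - 2 * int m + (if S b = 0 then 0 else 1)) * (f S :: 'a::field_char_0)"
proof -
  define X where "X i = (if i \<noteq> b \<and> S i = 0 \<and> times_var S i \<in> std (Suc m) then f S else 0)
     - (if i \<noteq> b \<and> 0 < S i then f S else 0)" for i
  have "lower (Suc m) (raise m f) S
      = (\<Sum>i<n. \<Sum>j<n. raise_lower_term S f m i j + (if i = j then X i else 0))"
    unfolding lower_raise_expand[OF S] X_def
    by (intro sum.cong refl) (simp add: lower_raise_term_eq[OF S])
  also have "\<dots> = (\<Sum>i<n. \<Sum>j<n. raise_lower_term S f m i j) + (\<Sum>i<n. X i)"
    by (simp add: sum.distrib)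
  also have "(\<Sum>i<n. \<Sum>j<n. raise_lower_term S f m i j) = raise (m - 1) (lower m f) S"
    unfolding raise_lower_expand[OF S] by (rule sum.swap)
  also have "(\<Sum>i<n. X i)
      = of_int (int (card {i\<in>{..<n}. i \<noteq> b \<and> S i = 0 \<and> times_var S i \<in> std (Suc m)})
        - int (card {i\<in>{..<n}. i \<noteq> b \<and> 0 < S i})) * f S"
    unfolding X_def sum_subtractf sum_if_const_eq_card[OF finite_lessThan]
    by (simp add: algebra_simps)
  finally show ?thesis unfolding up_down_count[OF S] .
qed

lemma raise_lin: "raise m (\<lambda>x. c * f x + d * g x) = (\<lambda>x. c * raise m f x + d * raise m g x)"
  by (simp add: raise_def fun_eq_iff sum_distrib_left sum.distrib[symmetric] if_distrib
      algebra_simps cong: if_cong)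

lemma lower_lin: "lower m (\<lambda>x. c * f x + d * g x) = (\<lambda>x. c * lower m f x + d * lower m g x)"
  by (simp add: lower_def fun_eq_iff sum_distrib_left sum.distrib[symmetric] if_distrib
      algebra_simps cong: if_cong)

definition stratum :: "bool \<Rightarrow> nat \<Rightarrow> (mono \<Rightarrow> 'a::zero) set" where
  "stratum \<beta> m = {f. \<forall>T. f T \<noteq> 0 \<longrightarrow> T \<in> std m \<and> (T b = 0) = \<beta>}"

text \<open>The stratum of monomials without \<open>x_b\<close> is the Boolean lattice of \<open>n - 1\<close> variables;
  the other one is that of \<open>n - 2\<close> variables shifted up by one degree, which raises its weight
  \<open>n - 2\<close> to \<open>n\<close>.\<close>
definition stratum_weight :: "bool \<Rightarrow> nat" where
  "stratum_weight \<beta> = (if \<beta> then n - 1 else n)"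

lemma stratum_lin:
  fixes f g :: "mono \<Rightarrow> 'a::field"
  assumes "f \<in> stratum \<beta> m" "g \<in> stratum \<beta> m"
  shows "(\<lambda>x. c * f x + d * g x) \<in> stratum \<beta> m"
  unfolding stratum_def
proof (intro CollectI allI impI)
  fix T assume "c * f T + d * g T \<noteq> 0"
  then have "f T \<noteq> 0 \<or> g T \<noteq> 0" by auto
  then show "T \<in> std m \<and> (T b = 0) = \<beta>" using assms by (auto simp: stratum_def)
qed

lemma raise_stratum:
  assumes f: "f \<in> stratum \<beta> m" shows "raise m f \<in> stratum \<beta> (Suc m)"
  unfolding stratum_def
proof (intro CollectI allI impI)
  fix T assume nz: "raise m f T \<noteq> 0"
  then have T: "T \<in> std (Suc m)" by (auto simp: raise_def split: if_splits)
  with nz obtain j where "0 < T j" "j \<noteq> b" "f (div_var T j) \<noteq> 0"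
    by (auto simp: raise_def lin_coeff_def elim!: sum.not_neutral_contains_not_neutral
        split: if_splits)
  then show "T \<in> std (Suc m) \<and> (T b = 0) = \<beta>"
    using f T by (auto simp: stratum_def var_exp_def)
qed

lemma lower_stratum:
  assumes f: "f \<in> stratum \<beta> (Suc m)" shows "lower (Suc m) f \<in> stratum \<beta> m"
  unfolding stratum_def
proof (intro CollectI allI impI)
  fix T assume nz: "lower (Suc m) f T \<noteq> 0"
  then have T: "T \<in> std m" by (auto simp: lower_def split: if_splits)
  with nz obtain i where "i \<noteq> b" "f (times_var T i) \<noteq> 0"
    by (auto simp: lower_def elim!: sum.not_neutral_contains_not_neutral split: if_splits)
  then show "T \<in> std m \<and> (T b = 0) = \<beta>"
    using f T by (auto simp: stratum_def var_exp_def)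
qed

lemma lower_raise_stratum:
  fixes f :: "mono \<Rightarrow> 'a::field_char_0"
  assumes f: "f \<in> stratum \<beta> m"
  shows "lower (Suc m) (raise m f)
    = (\<lambda>x. raise (m - 1) (lower m f) x + of_int (int (stratum_weight \<beta>) - 2 * int m) * f x)"
proof
  fix S
  show "lower (Suc m) (raise m f) S
    = raise (m - 1) (lower m f) S + of_int (int (stratum_weight \<beta>) - 2 * int m) * f S"
  proof (cases "S \<in> std m")
    case True
    have "of_int (int n - 1 - 2 * int m + (if S b = 0 then 0 else 1)) * f S
      = of_int (int (stratum_weight \<beta>) - 2 * int m) * f S"
    proof (cases "f S = 0")
      case False
      then have "int n - 1 - 2 * int m + (if S b = 0 then 0 else 1)
        = int (stratum_weight \<beta>) - 2 * int m"
        using f b_lt by (auto simp: stratum_def stratum_weight_def of_nat_diff)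
      then show ?thesis by (simp only:)
    qed simp
    then show ?thesis using lower_raise_commutator[OF True, of f] by simp
  next
    case False
    then have "f S = 0" using f by (auto simp: stratum_def)
    moreover have "lower (Suc m) (raise m f) S = 0" using False by (simp add: lower_def)
    moreover have "raise (m - 1) (lower m f) S = 0"
      using False by (cases m) (auto simp: raise_def lower_def intro!: sum.neutral)
    ultimately show ?thesis by simp
  qed
qed

lemma stratum_above_top:
  assumes "stratum_weight \<beta> < m" "f \<in> stratum \<beta> m" shows "f = (\<lambda>x. 0)"
proof
  fix T show "f T = 0"
  proof (rule ccontr)
    assume "f T \<noteq> 0"
    then have T: "T \<in> std m" and Tb: "(T b = 0) = \<beta>" using assms(2) by (auto simp: stratum_def)
    have "{i\<in>{..<n}. 0 < T i} \<subseteq> (if \<beta> then {..<n} - {b} else {..<n})" using Tb by auto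
    then have "card {i\<in>{..<n}. 0 < T i} \<le> card (if \<beta> then {..<n} - {b} else {..<n})"
      by (intro card_mono) auto
    then show False using card_support_std[OF T] assms(1) b_lt
      by (cases \<beta>) (auto simp: stratum_weight_def)
  qed
qed

lemma sl2_rep_stratum:
  "sl2_rep (stratum \<beta> :: nat \<Rightarrow> (mono \<Rightarrow> 'a::field_char_0) set) raise lower (stratum_weight \<beta>)"
proof
  show "(\<lambda>x. 0) \<in> stratum \<beta> m" for m by (simp add: stratum_def)
  show "lower 0 f = (\<lambda>x. 0)" for f :: "mono \<Rightarrow> 'a" by (simp add: lower_def fun_eq_iff)
qed (fact raise_lin lower_lin stratum_lin raise_stratum lower_stratum lower_raise_stratum
  stratum_above_top)+

definition std_piece :: "nat \<Rightarrow> (mono \<Rightarrow> 'a::zero) set" where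
  "std_piece m = {f. \<forall>T. T \<notin> std m \<longrightarrow> f T = 0}"

definition restrict_stratum :: "bool \<Rightarrow> (mono \<Rightarrow> 'a::zero) \<Rightarrow> mono \<Rightarrow> 'a" where
  "restrict_stratum \<beta> f = (\<lambda>T. if (T b = 0) = \<beta> then f T else 0)"

lemma restrict_stratum_in: "f \<in> std_piece m \<Longrightarrow> restrict_stratum \<beta> f \<in> stratum \<beta> m"
  by (auto simp: std_piece_def stratum_def restrict_stratum_def)

lemma restrict_stratum_split:
  "f = (\<lambda>x. 1 * restrict_stratum True f x + 1 * restrict_stratum False (f :: mono \<Rightarrow> 'a::field) x)"
  by (auto simp: restrict_stratum_def)

lemma raise_restrict_stratum_split:
  "raise m f = (\<lambda>x. raise m (restrict_stratum True f) x + raise m (restrict_stratum False f) x)"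
  using arg_cong[OF restrict_stratum_split[of f], of "raise m"] unfolding raise_lin by simp

lemma restrict_stratum_raise:
  fixes f :: "mono \<Rightarrow> 'a::field"
  assumes f: "f \<in> std_piece m"
  shows "restrict_stratum \<beta> (raise m f) = raise m (restrict_stratum \<beta> f)"
proof
  fix T
  have "raise m (restrict_stratum \<beta>' f) \<in> stratum \<beta>' (Suc m)" for \<beta>'
    using raise_stratum restrict_stratum_in[OF f] by blast
  then have other_zero: "(T b = 0) \<noteq> \<beta>' \<Longrightarrow> raise m (restrict_stratum \<beta>' f) T = 0" for \<beta>'
    unfolding stratum_def by blast
  have split:
    "raise m f T = raise m (restrict_stratum True f) T + raise m (restrict_stratum False f) T"
    using fun_cong[OF raise_restrict_stratum_split[of m f], of T] by simp
  show "restrict_stratum \<beta> (raise m f) T = raise m (restrict_stratum \<beta> f) T"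
    using other_zero[of True] other_zero[of False] split
    by (cases \<beta>; cases "T b = 0") (simp_all add: restrict_stratum_def)
qed

lemma raise_inj_on_std_piece:
  assumes "2 * m + 2 \<le> n"
  shows "inj_on (raise m) (std_piece m :: (mono \<Rightarrow> 'a::field_char_0) set)"
proof (rule inj_onI)
  fix f g :: "mono \<Rightarrow> 'a" assume f: "f \<in> std_piece m" and g: "g \<in> std_piece m"
    and eq: "raise m f = raise m g"
  have "restrict_stratum \<beta> f = restrict_stratum \<beta> g" for \<beta>
  proof -
    have "2 * m < stratum_weight \<beta>" using assms by (cases \<beta>) (simp_all add: stratum_weight_def)
    then have "inj_on (raise m) (stratum \<beta> m :: (mono \<Rightarrow> 'a) set)"
      by (rule sl2_rep.raise_inj_on[OF sl2_rep_stratum])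
    moreover have "raise m (restrict_stratum \<beta> f) = raise m (restrict_stratum \<beta> g)"
      using restrict_stratum_raise[OF f] restrict_stratum_raise[OF g] eq by metis
    ultimately show ?thesis using restrict_stratum_in[OF f] restrict_stratum_in[OF g]
      by (auto dest: inj_onD)
  qed
  then show "f = g" using restrict_stratum_split[of f] restrict_stratum_split[of g] by metis
qed

lemma raise_onto_std_piece:
  assumes "n < 2 * m + 2"
  shows "raise m ` (std_piece m :: (mono \<Rightarrow> 'a::field_char_0) set) = std_piece (Suc m)"
proof
  show "raise m ` std_piece m \<subseteq> (std_piece (Suc m) :: (mono \<Rightarrow> 'a) set)"
    by (auto simp: std_piece_def raise_def)
next
  show "std_piece (Suc m) \<subseteq> raise m ` (std_piece m :: (mono \<Rightarrow> 'a) set)"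
  proof
    fix h :: "mono \<Rightarrow> 'a" assume h: "h \<in> std_piece (Suc m)"
    have "\<exists>f\<in>stratum \<beta> m. raise m f = restrict_stratum \<beta> h" for \<beta>
    proof -
      have "stratum_weight \<beta> < 2 * Suc m"
        using assms by (cases \<beta>) (simp_all add: stratum_weight_def)
      from sl2_rep.raise_onto[OF sl2_rep_stratum this restrict_stratum_in[OF h]]
      show ?thesis by simp
    qed
    then obtain f1 f2 where f1: "f1 \<in> stratum True m" "raise m f1 = restrict_stratum True h"
      and f2: "f2 \<in> stratum False m" "raise m f2 = restrict_stratum False h"
      by blast
    have "f1 T = 0" "f2 T = 0" if "T \<notin> std m" for T
      using f1(1) f2(1) that by (auto simp: stratum_def)
    then have "(\<lambda>x. 1 * f1 x + 1 * f2 x) \<in> std_piece m" by (simp add: std_piece_def)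
    moreover have "raise m (\<lambda>x. 1 * f1 x + 1 * f2 x) = h"
      unfolding raise_lin f1(2) f2(2) by (rule restrict_stratum_split[symmetric])
    ultimately show "h \<in> raise m ` std_piece m" by blast
  qed
qed

lemma max_rank_mult_lin_coeff:
  assumes std_eq: "\<And>k. std_monos n G k = std k"
  shows "max_rank_mult n G (lin_coeff :: nat \<Rightarrow> 'a::field_char_0) k"
proof -
  have "mult_lin n G (lin_coeff :: nat \<Rightarrow> 'a) m = raise m" for m
    unfolding mult_lin_def raise_def std_eq by (simp add: fun_eq_iff)
  moreover have "graded_piece n G m = (std_piece m :: (mono \<Rightarrow> 'a) set)" for m
    unfolding graded_piece_def std_piece_def std_eq by simp
  moreover have "inj_on (raise k) (std_piece k :: (mono \<Rightarrow> 'a) set)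
      \<or> raise k ` (std_piece k :: (mono \<Rightarrow> 'a) set) = std_piece (Suc k)"
    using raise_inj_on_std_piece[of k, where 'a='a] raise_onto_std_piece[of k, where 'a='a]
    by linarith
  ultimately show ?thesis by (simp add: max_rank_mult_def)
qed

end

theorem lemma6p3:
  fixes n :: nat and G :: "mono set"
  assumes "n \<ge> 4"
    and "G \<subseteq> monomials n"
    and "card G = n + 1"
    and "\<forall>g\<in>G. mdeg n g = 2"
    and "minimal_gens G"
    and "artinian_mideal n G"
  shows "has_WLP TYPE('a::field_char_0) n G"
proof -
  have squares: "var_sq ` {..<n} \<subseteq> G" using var_sq_in_gens assms(4,6) by blast
  obtain g0 where G: "G = insert g0 (var_sq ` {..<n})" and g0: "g0 \<notin> var_sq ` {..<n}"
    using gens_eq_insert_squares[OF squares assms(3)] .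
  have "g0 \<in> G" "g0 \<in> monomials n" "mdeg n g0 = 2" using G assms(2,4) by auto
  then obtain a b where ab: "a < n" "b < n" "a \<noteq> b" and g0_eq: "g0 = var_pair a b"
    using extra_gen_eq_var_pair g0 squares assms(5) by metis
  interpret sqfree_pair n a b using ab by unfold_locales
  have "std_monos n G k = std k" for k using std_monos_squares_pair G g0_eq by simp
  then show ?thesis unfolding has_WLP_def using max_rank_mult_lin_coeff by blast
qed

end
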